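(* Consider the $2$-MultiQueue with $n$ queues in the long run, i.e. with the gaps between the ranks of its top-elements distributed according to their limiting (stationary) distribution. For every constant $a>0$ there is a constant $C>0$ such that, for all sufficiently large $n$, with probability at least $1-n^{-a}$ every one of $n^{a}$ consecutive deletions has rank error at most $C\,n\log n$.
   Context: The $2$-MultiQueue with $n$ queues: an infinite totally ordered set of elements $x_1<x_2<\cdots$ is assigned element-wise independently and uniformly at random to $n$ priority queues; each deletion picks two queues independently and uniformly at random and deletes the minimum of the one whose minimum is smaller. Ordering the queues by their minima (top-elements), this deletes from the $i$-th queue with $\Pr[\text{index}\le i]=1-(1-\tfrac in)^2$. The rank error of a deletion is $r-1$ where $r$ is the rank of the deleted element among all elements present just before the deletion. In the long run, the ranks of the top-elements are $r_i=1+\sum_{j<i}\delta_j$ with $\delta_1,\dots,\delta_{n-1}$ independent and $\delta_j$ geometrically distributed on $\{1,2,\dots\}$ with success probability $1-\frac{j}{n(1-(1-j/n)^2)}$. *)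

theory Defs
  imports "HOL-Probability.Probability"
begin

text \<open>Queues are identified by numbers 0,...,n-1.  The elements present at a given
time are identified by their position (0,1,2,...) in the increasing order of the
elements present initially; a configuration is given by the queue label of every
position.\<close>

text \<open>Success probability of the geometric gap delta_j (for 1 <= j <= n-1).\<close>
definition gap_succ :: "nat \<Rightarrow> nat \<Rightarrow> real" where
  "gap_succ n j = 1 - real j / (real n * (1 - (1 - real j / real n)^2))"

text \<open>Long-run (stationary) law of the configuration, position by position:
S is the set of queues whose top-element has already appeared.  While j = card S < n
queues are opened, the next element is the top of a new queue with probability
gap_succ n j (so the gap delta_j is geometric with that success probability; the new
queue is uniform among the unopened ones), and otherwise it is a non-top element
lying uniformly in one of the j opened queues.  Once all n queues are opened, each
element lies uniformly in one of the n queues.\<close>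
definition step_prob :: "nat \<Rightarrow> nat set \<Rightarrow> nat \<Rightarrow> real" where
  "step_prob n S q =
     (if n \<le> q then 0
      else if q \<in> S then
        (if card S < n then (1 - gap_succ n (card S)) / real (card S) else 1 / real n)
      else if S = {} then 1 / real n
      else gap_succ n (card S) / real (n - card S))"

fun init_prob_aux :: "nat \<Rightarrow> nat set \<Rightarrow> nat list \<Rightarrow> real" where
  "init_prob_aux n S [] = 1"
| "init_prob_aux n S (q # qs) = step_prob n S q * init_prob_aux n (insert q S) qs"

text \<open>Probability that the first length ls positions carry the labels ls.\<close>
definition init_prob :: "nat \<Rightarrow> nat list \<Rightarrow> real" where
  "init_prob n ls = init_prob_aux n {} ls"

definition top_pos :: "(nat \<Rightarrow> nat) \<Rightarrow> nat set \<Rightarrow> nat \<Rightarrow> nat" where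
  "top_pos Lw P q = (LEAST k. k \<in> P \<and> Lw k = q)"

definition del_pos :: "(nat \<Rightarrow> nat) \<Rightarrow> nat set \<Rightarrow> nat \<times> nat \<Rightarrow> nat" where
  "del_pos Lw P ab = min (top_pos Lw P (fst ab)) (top_pos Lw P (snd ab))"

text \<open>Present elements before deletion number t (deletions numbered 0,1,2,...).\<close>
fun present :: "(nat \<Rightarrow> nat) \<Rightarrow> (nat \<Rightarrow> nat \<times> nat) \<Rightarrow> nat \<Rightarrow> nat set" where
  "present Lw cw 0 = UNIV"
| "present Lw cw (Suc t) = present Lw cw t - {del_pos Lw (present Lw cw t) (cw t)}"

definition deleted :: "(nat \<Rightarrow> nat) \<Rightarrow> (nat \<Rightarrow> nat \<times> nat) \<Rightarrow> nat \<Rightarrow> nat" where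
  "deleted Lw cw t = del_pos Lw (present Lw cw t) (cw t)"

definition rank_error :: "(nat \<Rightarrow> nat) \<Rightarrow> (nat \<Rightarrow> nat \<times> nat) \<Rightarrow> nat \<Rightarrow> nat" where
  "rank_error Lw cw t = card {k \<in> present Lw cw t. k < deleted Lw cw t}"

text \<open>M is a probability space carrying the long-run initial configuration L and the
independent uniform choices c t of two queues for deletion t, specified through the
joint law of all finite-dimensional cylinders.\<close>
definition mq_long_run ::
  "'a measure \<Rightarrow> nat \<Rightarrow> ('a \<Rightarrow> nat \<Rightarrow> nat) \<Rightarrow> ('a \<Rightarrow> nat \<Rightarrow> nat \<times> nat) \<Rightarrow> bool" where
  "mq_long_run M n L c \<longleftrightarrow>
     prob_space M \<and>
     (\<forall>k. (\<lambda>\<omega>. L \<omega> k) \<in> measurable M (count_space UNIV)) \<and>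
     (\<forall>t. (\<lambda>\<omega>. c \<omega> t) \<in> measurable M (count_space UNIV)) \<and>
     (\<forall>ls T ps. (\<forall>t<T. ps t \<in> {0..<n} \<times> {0..<n}) \<longrightarrow>
        measure M {\<omega> \<in> space M. (\<forall>i<length ls. L \<omega> i = ls ! i) \<and> (\<forall>t<T. c \<omega> t = ps t)}
          = init_prob n ls * (1 / (real n)^2) ^ T)"

end

(* The queue labels of the present elements, listed in increasing order, form the configuration
   of the process. Its long-run law init_prob is stationary: summing the masses of all
   configurations that one deletion, with a uniformly chosen pair of queues, maps to a given prefix
   returns n^2 times the mass of that prefix. Hence the configuration has the same law at every
   time. A deletion has rank error greater than K only if one of the two chosen queues is missing
   among the first K + 1 labels, and under init_prob every label lies in a fixed queue with
   conditional probability at least 1/(2n). So at any fixed time the rank error exceeds K with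
   probability at most n (1 - 1/(2n))^(K+1), and a union bound over the first n^a deletions with
   K about (4a + 4) n ln n gives the theorem. *)

theory Submission
  imports Defs
begin

definition lists_len :: "'b set \<Rightarrow> nat \<Rightarrow> 'b list set" where
  "lists_len A m = {xs. set xs \<subseteq> A \<and> length xs = m}"

lemma lists_len_0 [simp]: "lists_len A 0 = {[]}"
  unfolding lists_len_def by auto

lemma lists_len_Suc: "lists_len A (Suc m) = (\<lambda>(z, r). z # r) ` (A \<times> lists_len A m)"
  by (auto simp: lists_len_def length_Suc_conv)

lemma finite_lists_len [simp]: "finite A \<Longrightarrow> finite (lists_len A m)"
  unfolding lists_len_def by (rule finite_lists_length_eq)

lemma card_lists_len: "finite A \<Longrightarrow> card (lists_len A m) = card A ^ m"
  unfolding lists_len_def by (rule card_lists_length_eq)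

lemma sum_lists_len_Suc:
  assumes "finite A"
  shows "(\<Sum>ls\<in>lists_len A (Suc m). f ls) = (\<Sum>z\<in>A. \<Sum>r\<in>lists_len A m. f (z # r))"
proof -
  have "inj_on (\<lambda>(z, r). z # r) (A \<times> lists_len A m)" by (auto simp: inj_on_def)
  then have "(\<Sum>ls\<in>lists_len A (Suc m). f ls) = (\<Sum>x\<in>A \<times> lists_len A m. f ((\<lambda>(z, r). z # r) x))"
    unfolding lists_len_Suc by (rule sum.reindex[unfolded comp_def])
  then show ?thesis by (simp add: sum.cartesian_product case_prod_beta)
qed

lemma map_upt_length_eq_iff: "map f [0..<length xs] = xs \<longleftrightarrow> (\<forall>i<length xs. f i = xs ! i)"
proof
  assume "map f [0..<length xs] = xs"
  then show "\<forall>i<length xs. f i = xs ! i" by (metis add_0 diff_zero nth_map nth_upt length_upt)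
next
  assume "\<forall>i<length xs. f i = xs ! i"
  then show "map f [0..<length xs] = xs" by (intro nth_equalityI) auto
qed

lemma sum_pair_members:
  fixes F :: "'b \<Rightarrow> real"
  assumes "finite T"
  shows "(\<Sum>(a, b)\<in>T \<times> T. if a = b then F a else F a + F b) = (2 * real (card T) - 1) * sum F T"
proof -
  have "(\<Sum>(a, b)\<in>T \<times> T. if a = b then F a else F a + F b)
      = (\<Sum>a\<in>T. \<Sum>b\<in>T. F a + F b - (if a = b then F a else 0))"
    unfolding sum.cartesian_product by (auto intro!: sum.cong)
  also have "\<dots> = (\<Sum>a\<in>T. real (card T) * F a + sum F T - F a)"
    using assms by (auto simp: sum_subtractf sum.distrib intro!: sum.cong)
  also have "\<dots> = (2 * real (card T) - 1) * sum F T"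
    by (simp add: sum_subtractf sum.distrib sum_distrib_left sum_distrib_right algebra_simps)
  finally show ?thesis .
qed

lemma card_le_of_subset_lessThan: "S \<subseteq> {..<n} \<Longrightarrow> card S \<le> n"
  using card_mono[of "{..<n}" S] by simp

lemma card_lessThan_diff: "S \<subseteq> {..<n} \<Longrightarrow> real (card ({..<n} - S)) = real n - real (card S)"
  using card_le_of_subset_lessThan[of S n] finite_subset[of S "{..<n}"]
  by (simp add: card_Diff_subset of_nat_diff)

lemma enumerate_eq_strict_mono:
  fixes S :: "nat set"
  assumes S: "infinite S" and f: "strict_mono f" and range: "range f = S"
  shows "enumerate S i = f i"
proof (induction i)
  case 0
  show ?case unfolding enumerate_0
  proof (rule Least_equality)
    show "f 0 \<in> S" using range by auto
    fix y assume "y \<in> S"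
    then obtain j where "y = f j" using range by auto
    then show "f 0 \<le> y" using f by (simp add: strict_mono_less_eq)
  qed
next
  case (Suc i)
  show ?case unfolding enumerate_Suc''[OF S] Suc
  proof (rule Least_equality)
    show "f (Suc i) \<in> S \<and> f i < f (Suc i)" using range f by (auto simp: strict_mono_def)
    fix y assume y: "y \<in> S \<and> f i < y"
    then obtain j where j: "y = f j" using range by auto
    then have "i < j" using y f by (simp add: strict_mono_less)
    then show "f (Suc i) \<le> y" using f j by (simp add: strict_mono_less_eq)
  qed
qed

lemma enumerate_UNIV_nat: "enumerate (UNIV :: nat set) i = i"
  using enumerate_eq_strict_mono[of UNIV id] by (simp add: strict_mono_def)

lemma enumerate_Diff_enumerate:
  fixes S :: "nat set"
  assumes S: "infinite S"
  shows "enumerate (S - {enumerate S r}) i = (if i < r then enumerate S i else enumerate S (Suc i))"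
proof -
  define f where "f i = (if i < r then enumerate S i else enumerate S (Suc i))" for i
  have "strict_mono f" unfolding strict_mono_def f_def using S by auto
  moreover have "range f = S - {enumerate S r}"
  proof (intro equalityI subsetI)
    fix x assume "x \<in> range f"
    then show "x \<in> S - {enumerate S r}"
      using enumerate_in_set[OF S] inj_enumerate[OF S] unfolding f_def by (auto simp: inj_eq)
  next
    fix x assume x: "x \<in> S - {enumerate S r}"
    then obtain j where j: "enumerate S j = x" using enumerate_Ex[OF S] by blast
    then have "j \<noteq> r" using x by auto
    then have "x = f (if j < r then j else j - 1)" using j unfolding f_def by auto
    then show "x \<in> range f" by blast
  qed
  ultimately show ?thesis using enumerate_eq_strict_mono[of "S - {enumerate S r}"] S unfolding f_def
    by simp
qed

lemma Least_disj_eq_min: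
  fixes P Q :: "'a::wellorder \<Rightarrow> bool"
  assumes "\<exists>x. P x" "\<exists>x. Q x"
  shows "(LEAST x. P x \<or> Q x) = min (LEAST x. P x) (LEAST x. Q x)"
proof (rule Least_equality)
  show "P (min (Least P) (Least Q)) \<or> Q (min (Least P) (Least Q))"
    using assms by (simp add: min_def LeastI_ex)
  fix y assume "P y \<or> Q y"
  then show "min (Least P) (Least Q) \<le> y" by (auto intro: min.coboundedI1 min.coboundedI2 Least_le)
qed

section \<open>The long-run law of the configuration\<close>

lemma gap_succ_eq:
  assumes "0 < j" "j < n"
  shows "gap_succ n j = real (n - j) / (2 * real n - real j)"
proof -
  have "real n * (1 - (1 - real j / real n)^2) = real j * (2 * real n - real j) / real n"
    using assms by (simp add: field_simps power2_eq_square)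
  then show ?thesis
    using assms unfolding gap_succ_def by (simp add: field_simps of_nat_diff)
qed

lemma step_prob_eq:
  assumes S: "S \<subseteq> {..<n}" and q: "q < n"
  shows "step_prob n S q =
    (if q \<in> S then real n / (real (card S) * (2 * real n - real (card S)))
     else if S = {} then 1 / real n else 1 / (2 * real n - real (card S)))"
proof -
  have fin: "finite S" using S finite_subset by blast
  have card_le: "card S \<le> n" using card_le_of_subset_lessThan[OF S] .
  consider "q \<in> S" "card S < n" | "q \<in> S" "card S = n" | "q \<notin> S" "S = {}" | "q \<notin> S" "S \<noteq> {}"
    using card_le by linarith
  then show ?thesis
  proof cases
    case 1
    then have "card S > 0" using fin card_gt_0_iff by blast
    then have "1 - gap_succ n (card S) = real n / (2 * real n - real (card S))"
      using 1 gap_succ_eq[of "card S" n] by (simp add: field_simps of_nat_diff)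
    then show ?thesis using 1 q unfolding step_prob_def by simp
  next
    case 2
    then show ?thesis using q unfolding step_prob_def by (simp add: field_simps)
  next
    case 3
    then show ?thesis using q unfolding step_prob_def by simp
  next
    case 4
    have "card S < n"
      using psubset_card_mono[of "{..<n}" S] S q 4 by auto
    moreover have "card S > 0" using 4 fin card_gt_0_iff by blast
    ultimately show ?thesis
      using 4 q gap_succ_eq[of "card S" n] unfolding step_prob_def
      by (simp add: field_simps of_nat_diff)
  qed
qed

lemma step_prob_nonneg: "S \<subseteq> {..<n} \<Longrightarrow> step_prob n S q \<ge> 0"
  using card_le_of_subset_lessThan[of S n] step_prob_eq[of S n q]
  by (cases "q < n") (auto simp: step_prob_def)

lemma step_prob_ge:
  assumes S: "S \<subseteq> {..<n}" and q: "q < n"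
  shows "step_prob n S q \<ge> 1 / (2 * real n)"
proof -
  have j: "real (card S) \<le> real n" using card_le_of_subset_lessThan[OF S] by simp
  show ?thesis
  proof (cases "q \<in> S")
    case True
    then have j0: "real (card S) > 0" using S finite_subset card_gt_0_iff by fastforce
    have "real (card S) * (2 * real n - real (card S)) \<le> real n * (2 * real n)"
      using j j0 by (intro mult_mono) auto
    then have "1 / (2 * real n) \<le> real n / (real (card S) * (2 * real n - real (card S)))"
      using q j j0 by (simp add: field_simps)
    then show ?thesis using step_prob_eq[OF S q] True by simp
  next
    case False
    then show ?thesis using step_prob_eq[OF S q] q j by (auto simp: field_simps)
  qed
qed

lemma sum_step_prob:
  assumes S: "S \<subseteq> {..<n}" and n: "n > 0"
  shows "(\<Sum>q<n. step_prob n S q) = 1"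
proof -
  have fin: "finite S" using S finite_subset by blast
  have j: "card S \<le> n" using card_le_of_subset_lessThan[OF S] .
  define d where "d = 2 * real n - real (card S)"
  have d: "d > 0" using j n unfolding d_def by linarith
  have "(\<Sum>q<n. step_prob n S q) = (\<Sum>q\<in>S. step_prob n S q) + (\<Sum>q\<in>{..<n} - S. step_prob n S q)"
    using S fin by (metis sum.subset_diff finite_lessThan add.commute)
  also have "(\<Sum>q\<in>S. step_prob n S q) = (\<Sum>q\<in>S. real n / (real (card S) * d))"
    using S step_prob_eq[OF S] unfolding d_def by (intro sum.cong) auto
  also have "(\<Sum>q\<in>{..<n} - S. step_prob n S q) = (\<Sum>q\<in>{..<n} - S. if S = {} then 1 / real n else 1 / d)"
    using S step_prob_eq[OF S] unfolding d_def by (intro sum.cong) auto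
  also have "(\<Sum>q\<in>S. real n / (real (card S) * d))
      + (\<Sum>q\<in>{..<n} - S. if S = {} then 1 / real n else 1 / d)
      = real (card S) * (real n / (real (card S) * d))
        + real (n - card S) * (if S = {} then 1 / real n else 1 / d)"
    using S fin by (simp add: card_Diff_subset)
  also have "\<dots> = 1"
  proof (cases "S = {}")
    case False
    then have "real (card S) > 0" using fin by (simp add: card_gt_0_iff)
    then have "real (card S) * (real n / (real (card S) * d)) = real n / d" using d by simp
    moreover have "real (n - card S) * (1 / d) = (real n - real (card S)) / d"
      using j by (simp add: of_nat_diff)
    ultimately show ?thesis
      using False d by (simp add: d_def add_divide_distrib[symmetric])
  qed (use n in simp)
  finally show ?thesis .
qed

lemma init_prob_aux_nonneg: "S \<subseteq> {..<n} \<Longrightarrow> init_prob_aux n S ls \<ge> 0"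
proof (induction ls arbitrary: S)
  case (Cons q ls)
  show ?case
  proof (cases "q < n")
    case True
    then show ?thesis using Cons step_prob_nonneg[OF Cons.prems, of q] by simp
  qed (simp add: step_prob_def)
qed simp

lemma init_prob_aux_eq_0: "\<not> set ls \<subseteq> {..<n} \<Longrightarrow> init_prob_aux n S ls = 0"
  by (induction ls arbitrary: S) (auto simp: step_prob_def)

lemma sum_init_prob_aux:
  assumes "S \<subseteq> {..<n}" "n > 0"
  shows "(\<Sum>ls\<in>lists_len {..<n} m. init_prob_aux n S ls) = 1"
  using assms
proof (induction m arbitrary: S)
  case (Suc m)
  then have "(\<Sum>ls\<in>lists_len {..<n} (Suc m). init_prob_aux n S ls) = (\<Sum>z<n. step_prob n S z)"
    by (simp add: sum_lists_len_Suc flip: sum_distrib_left)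
  then show ?case using sum_step_prob[OF Suc.prems] by simp
qed simp

lemma sum_step_prob_avoid_le:
  assumes "S \<subseteq> {..<n}" "q < n"
  shows "(\<Sum>z<n. if z \<noteq> q then step_prob n S z else 0) \<le> 1 - 1 / (2 * real n)"
proof -
  have "{..<n} \<inter> {z. z \<noteq> q} = {..<n} - {q}" by auto
  then have "(\<Sum>z<n. if z \<noteq> q then step_prob n S z else 0) = (\<Sum>z<n. step_prob n S z) - step_prob n S q"
    using assms by (simp add: sum.If_cases sum_diff1)
  then show ?thesis using sum_step_prob[OF assms(1)] step_prob_ge[OF assms] assms by simp
qed

lemma init_prob_aux_avoid_le:
  assumes "S \<subseteq> {..<n}" "q < n"
  shows "(\<Sum>ls\<in>lists_len {..<n} m. if \<forall>i<m. B i \<longrightarrow> ls ! i \<noteq> q then init_prob_aux n S ls else 0)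
     \<le> (1 - 1 / (2 * real n)) ^ card {i. i < m \<and> B i}"
  using assms
proof (induction m arbitrary: S B)
  case (Suc m)
  define x where "x = 1 - 1 / (2 * real n)"
  have x0: "x \<ge> 0" unfolding x_def using Suc.prems by (simp add: field_simps)
  define bd where "bd = x ^ card {i. i < m \<and> B (Suc i)}"
  have bd0: "bd \<ge> 0" unfolding bd_def using x0 by simp
  have split: "(\<forall>i<Suc m. B i \<longrightarrow> (z # r) ! i \<noteq> q)
      \<longleftrightarrow> (B 0 \<longrightarrow> z \<noteq> q) \<and> (\<forall>i<m. B (Suc i) \<longrightarrow> r ! i \<noteq> q)" for z r
    by (auto simp: less_Suc_eq_0_disj)
  have first: "(\<Sum>z<n. if B 0 \<longrightarrow> z \<noteq> q then step_prob n S z else 0) \<le> (if B 0 then x else 1)"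
    using sum_step_prob_avoid_le[OF Suc.prems] sum_step_prob[OF Suc.prems(1)] Suc.prems
    unfolding x_def by (cases "B 0") simp_all
  have "(\<Sum>ls\<in>lists_len {..<n} (Suc m). if \<forall>i<Suc m. B i \<longrightarrow> ls ! i \<noteq> q then init_prob_aux n S ls else 0)
     = (\<Sum>z<n. if B 0 \<longrightarrow> z \<noteq> q then step_prob n S z *
         (\<Sum>r\<in>lists_len {..<n} m. if \<forall>i<m. B (Suc i) \<longrightarrow> r ! i \<noteq> q
            then init_prob_aux n (insert z S) r else 0) else 0)"
    by (simp add: sum_lists_len_Suc split sum_distrib_left if_distrib cong: if_cong)
      (auto intro!: sum.cong)
  also have "\<dots> \<le> (\<Sum>z<n. if B 0 \<longrightarrow> z \<noteq> q then step_prob n S z * bd else 0)"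
  proof (intro sum_mono)
    fix z assume "z \<in> {..<n}"
    then have "insert z S \<subseteq> {..<n}" using Suc.prems by auto
    then show "(if B 0 \<longrightarrow> z \<noteq> q then step_prob n S z *
         (\<Sum>r\<in>lists_len {..<n} m. if \<forall>i<m. B (Suc i) \<longrightarrow> r ! i \<noteq> q
            then init_prob_aux n (insert z S) r else 0) else 0)
         \<le> (if B 0 \<longrightarrow> z \<noteq> q then step_prob n S z * bd else 0)"
      using Suc.IH[of "insert z S" "\<lambda>i. B (Suc i)"] Suc.prems step_prob_nonneg[OF Suc.prems(1), of z]
      unfolding bd_def x_def by (simp add: mult_left_mono)
  qed
  also have "\<dots> = bd * (\<Sum>z<n. if B 0 \<longrightarrow> z \<noteq> q then step_prob n S z else 0)"
    by (simp add: sum_distrib_left if_distrib mult.commute cong: if_cong)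
  also have "\<dots> \<le> bd * (if B 0 then x else 1)"
    by (rule mult_left_mono[OF first bd0])
  also have "\<dots> = x ^ card {i. i < Suc m \<and> B i}"
  proof -
    have "{i. i < Suc m \<and> B i} = (if B 0 then {0} else {}) \<union> Suc ` {i. i < m \<and> B (Suc i)}"
      by (auto simp: less_Suc_eq_0_disj)
    then have "card {i. i < Suc m \<and> B i} = (if B 0 then 1 else 0) + card {i. i < m \<and> B (Suc i)}"
      by (simp add: card_Un_disjoint card_image)
    then show ?thesis unfolding bd_def by (simp add: mult.commute)
  qed
  finally show ?case unfolding x_def .
qed simp

lemma sum_init_prob_not_covering:
  assumes n: "n > 0"
  shows "(\<Sum>ls\<in>lists_len {..<n} m. if \<not> {..<n} \<subseteq> set ls then init_prob n ls else 0)
     \<le> real n * (1 - 1 / (2 * real n)) ^ m"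
proof -
  have "(\<Sum>ls\<in>lists_len {..<n} m. if \<not> {..<n} \<subseteq> set ls then init_prob n ls else 0)
      \<le> (\<Sum>ls\<in>lists_len {..<n} m. \<Sum>q<n. if q \<notin> set ls then init_prob n ls else 0)"
  proof (intro sum_mono)
    fix ls
    have nonneg: "init_prob n ls \<ge> 0" unfolding init_prob_def by (rule init_prob_aux_nonneg) simp
    show "(if \<not> {..<n} \<subseteq> set ls then init_prob n ls else 0)
        \<le> (\<Sum>q<n. if q \<notin> set ls then init_prob n ls else 0)"
    proof (cases "{..<n} \<subseteq> set ls")
      case False
      then obtain q where "q < n" "q \<notin> set ls" by auto
      then have "(if q \<notin> set ls then init_prob n ls else 0)
          \<le> (\<Sum>q<n. if q \<notin> set ls then init_prob n ls else 0)"
        using nonneg by (intro member_le_sum) auto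
      then show ?thesis using False \<open>q \<notin> set ls\<close> by simp
    qed (use nonneg in \<open>simp add: sum_nonneg\<close>)
  qed
  also have "\<dots> = (\<Sum>q<n. \<Sum>ls\<in>lists_len {..<n} m.
      if \<forall>i<m. ls ! i \<noteq> q then init_prob_aux n {} ls else 0)"
    unfolding init_prob_def
    by (subst sum.swap, intro sum.cong refl) (auto simp: lists_len_def in_set_conv_nth)
  also have "\<dots> \<le> (\<Sum>q<n. (1 - 1 / (2 * real n)) ^ m)"
    using init_prob_aux_avoid_le[of "{}" n _ m "\<lambda>_. True"] by (intro sum_mono) simp
  also have "\<dots> = real n * (1 - 1 / (2 * real n)) ^ m" by simp
  finally show ?thesis .
qed

section \<open>Stationarity under one deletion\<close>

(* From the labels of the first m + 1 present elements and the chosen pair p, the labels of the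
   first m present elements after the deletion: the first entry in a queue of p is the deleted
   top-element; if there is none among the first m entries, the last one is dropped. *)
fun prefix_step :: "nat \<times> nat \<Rightarrow> nat list \<Rightarrow> nat list" where
  "prefix_step p [] = []"
| "prefix_step p (z # r) =
     (if r = [] then [] else if z = fst p \<or> z = snd p then r else z # prefix_step p r)"

lemma length_prefix_step [simp]: "length (prefix_step p ls) = length ls - 1"
  by (induction p ls rule: prefix_step.induct) auto

lemma set_prefix_step: "set (prefix_step p ls) \<subseteq> set ls"
  by (induction p ls rule: prefix_step.induct) auto

lemma nth_prefix_step:
  "i < length ls - 1 \<Longrightarrow>
   prefix_step p ls ! i =
     (if \<exists>j\<le>i. ls ! j = fst p \<or> ls ! j = snd p then ls ! Suc i else ls ! i)"
proof (induction p ls arbitrary: i rule: prefix_step.induct)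
  case (2 p z r)
  show ?case
  proof (cases "r = [] \<or> z = fst p \<or> z = snd p")
    case True
    then show ?thesis using "2.prems" by (auto intro: exI[of _ 0])
  next
    case False
    show ?thesis
    proof (cases i)
      case (Suc i')
      have "(\<exists>j\<le>Suc i'. (z # r) ! j = fst p \<or> (z # r) ! j = snd p)
          \<longleftrightarrow> (\<exists>j\<le>i'. r ! j = fst p \<or> r ! j = snd p)"
        using False by (simp add: Ex_less_Suc2 flip: less_Suc_eq_le)
      then show ?thesis using "2.IH"[of i'] "2.prems" False Suc by auto
    qed (use False in auto)
  qed
qed simp

definition opening_mass :: "nat \<Rightarrow> nat set \<Rightarrow> nat list \<Rightarrow> real" where
  "opening_mass n S w = (\<Sum>x\<in>{..<n} - S. step_prob n S x * init_prob_aux n (insert x S) w)"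

definition preimage_prob :: "nat \<Rightarrow> nat set \<Rightarrow> nat \<times> nat \<Rightarrow> nat list \<Rightarrow> real" where
  "preimage_prob n S p ls =
     (\<Sum>ls'\<in>lists_len {..<n} (Suc (length ls)).
        if prefix_step p ls' = ls then init_prob_aux n S ls' else 0)"

(* Only pairs of queues not yet opened in S are counted, so that a hit at the first entry opens a
   new queue (preimage_mass_Cons); for S = {} all pairs are counted. *)
definition preimage_mass :: "nat \<Rightarrow> nat set \<Rightarrow> nat list \<Rightarrow> real" where
  "preimage_mass n S ls = (\<Sum>p\<in>({..<n} - S) \<times> ({..<n} - S). preimage_prob n S p ls)"

(* The subtracted term is the closed form of preimage_mass; for S = {} it is n^2 times
   init_prob_aux n {} ls, which is the stationarity of init_prob. *)
definition preimage_defect :: "nat \<Rightarrow> nat set \<Rightarrow> nat list \<Rightarrow> real" where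
  "preimage_defect n S ls = preimage_mass n S ls
     - (real n * (real n - real (card S)) * init_prob_aux n S ls
        - real (card S) * (2 * real n - real (card S)) * opening_mass n S ls)"

lemma preimage_prob_Cons:
  assumes y: "y < n" and w: "set w \<subseteq> {..<n}"
  shows "preimage_prob n S p (y # w) =
    (\<Sum>z<n. if z = fst p \<or> z = snd p then init_prob_aux n S (z # y # w) else 0)
    + (if y = fst p \<or> y = snd p then 0 else step_prob n S y * preimage_prob n (insert y S) p w)"
proof -
  let ?L = "lists_len {..<n} (Suc (length w))"
  have yw: "y # w \<in> ?L" using y w by (auto simp: lists_len_def)
  have r_ne: "r \<noteq> []" if "r \<in> ?L" for r using that by (auto simp: lists_len_def)
  have first_entry: "(\<Sum>r\<in>?L. if prefix_step p (z # r) = y # w then init_prob_aux n S (z # r) else 0)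
     = (if z = fst p \<or> z = snd p then init_prob_aux n S (z # y # w) else 0)
       + (if z = y \<and> \<not> (y = fst p \<or> y = snd p)
          then step_prob n S y * preimage_prob n (insert y S) p w else 0)"
    for z
  proof (cases "z = fst p \<or> z = snd p")
    case True
    then have "(\<Sum>r\<in>?L. if prefix_step p (z # r) = y # w then init_prob_aux n S (z # r) else 0)
        = (\<Sum>r\<in>?L. if r = y # w then init_prob_aux n S (z # y # w) else 0)"
      using r_ne by (intro sum.cong) auto
    also have "\<dots> = init_prob_aux n S (z # y # w)" using yw by simp
    finally show ?thesis using True by auto
  next
    case False
    then have "(\<Sum>r\<in>?L. if prefix_step p (z # r) = y # w then init_prob_aux n S (z # r) else 0)
        = (\<Sum>r\<in>?L. if z = y then (if prefix_step p r = w
             then step_prob n S y * init_prob_aux n (insert y S) r else 0) else 0)"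
      using r_ne by (intro sum.cong) auto
    then show ?thesis
      using False by (auto simp: preimage_prob_def sum_distrib_left intro!: sum.cong)
  qed
  have single: "(\<Sum>z<n. if z = y \<and> Q then V else 0) = (if Q then V else 0)" for Q and V :: real
    using y by (cases Q) simp_all
  have "preimage_prob n S p (y # w)
      = (\<Sum>z<n. \<Sum>r\<in>?L. if prefix_step p (z # r) = y # w then init_prob_aux n S (z # r) else 0)"
    unfolding preimage_prob_def length_Cons by (rule sum_lists_len_Suc) simp
  then show ?thesis by (simp only: first_entry sum.distrib single) simp
qed

lemma preimage_mass_Cons:
  assumes S: "S \<subseteq> {..<n}" and y: "y < n" and w: "set w \<subseteq> {..<n}"
  shows "preimage_mass n S (y # w) = (2 * (real n - real (card S)) - 1) * opening_mass n S (y # w)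
           + step_prob n S y * preimage_mass n (insert y S) w"
proof -
  let ?T = "{..<n} - S"
  define F where "F z = init_prob_aux n S (z # y # w)" for z
  have hits: "(\<Sum>z<n. if z = fst p \<or> z = snd p then F z else 0)
      = (if fst p = snd p then F (fst p) else F (fst p) + F (snd p))" if "p \<in> ?T \<times> ?T" for p
  proof -
    have "{z\<in>{..<n}. z = fst p \<or> z = snd p} = {fst p, snd p}" using that by auto
    then show ?thesis by (auto simp: sum.inter_filter[symmetric])
  qed
  have "preimage_mass n S (y # w)
      = (\<Sum>p\<in>?T \<times> ?T. if fst p = snd p then F (fst p) else F (fst p) + F (snd p))
        + (\<Sum>p\<in>?T \<times> ?T.
            if y = fst p \<or> y = snd p then 0 else step_prob n S y * preimage_prob n (insert y S) p w)"
    unfolding preimage_mass_def preimage_prob_Cons[OF y w] F_def[symmetric]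
    by (simp add: sum.distrib hits)
  also have "(\<Sum>p\<in>?T \<times> ?T. if fst p = snd p then F (fst p) else F (fst p) + F (snd p))
      = (2 * (real n - real (card S)) - 1) * opening_mass n S (y # w)"
    using sum_pair_members[of ?T F] card_lessThan_diff[OF S]
    by (simp add: F_def opening_mass_def case_prod_beta)
  also have "(\<Sum>p\<in>?T \<times> ?T.
        if y = fst p \<or> y = snd p then 0 else step_prob n S y * preimage_prob n (insert y S) p w)
      = (\<Sum>p\<in>({..<n} - insert y S) \<times> ({..<n} - insert y S).
          step_prob n S y * preimage_prob n (insert y S) p w)"
    by (rule sum.mono_neutral_cong_right) auto
  also have "\<dots> = step_prob n S y * preimage_mass n (insert y S) w"
    unfolding preimage_mass_def by (simp add: sum_distrib_left)
  finally show ?thesis .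
qed

lemma opening_mass_Cons_opened:
  assumes S: "S \<subseteq> {..<n}" and y: "y \<in> S"
  shows "opening_mass n S (y # w)
    = real n / ((1 + real (card S)) * (2 * real n - (1 + real (card S)))) * opening_mass n S w"
proof -
  have fin: "finite S" using S finite_subset by blast
  have "step_prob n S x * init_prob_aux n (insert x S) (y # w) =
      real n / ((1 + real (card S)) * (2 * real n - (1 + real (card S))))
      * (step_prob n S x * init_prob_aux n (insert x S) w)"
    if x: "x \<in> {..<n} - S" for x
  proof -
    have "insert y (insert x S) = insert x S" using y by auto
    moreover have "step_prob n (insert x S) y
        = real n / ((1 + real (card S)) * (2 * real n - (1 + real (card S))))"
      using step_prob_eq[of "insert x S" n y] S x y fin by auto
    ultimately show ?thesis by simp
  qed
  then show ?thesis
    unfolding opening_mass_def sum_distrib_left by (intro sum.cong) auto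
qed

lemma opening_mass_Cons_new:
  assumes S: "S \<subseteq> {..<n}" and y: "y < n" "y \<notin> S"
  shows "opening_mass n S (y # w) = step_prob n S y *
    (real n / ((1 + real (card S)) * (2 * real n - (1 + real (card S))))
       * init_prob_aux n (insert y S) w
     + opening_mass n (insert y S) w)"
proof -
  have fin: "finite S" using S finite_subset by blast
  have Sy: "insert y S \<subseteq> {..<n}" using S y by auto
  have T: "{..<n} - S = insert y ({..<n} - insert y S)" using y by auto
  have exchange:
    "step_prob n S x * step_prob n (insert x S) y = step_prob n S y * step_prob n (insert y S) x"
    if x: "x \<in> {..<n} - insert y S" for x
    using step_prob_eq[of "insert x S" n y] step_prob_eq[OF Sy, of x] step_prob_eq[OF S, of x]
      step_prob_eq[OF S, of y] S x y fin by auto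
  have "opening_mass n S (y # w) = step_prob n S y * init_prob_aux n (insert y S) (y # w)
      + (\<Sum>x\<in>{..<n} - insert y S. step_prob n S x * init_prob_aux n (insert x S) (y # w))"
    unfolding opening_mass_def by (subst T, subst sum.insert) auto
  also have "init_prob_aux n (insert y S) (y # w) =
      real n / ((1 + real (card S)) * (2 * real n - (1 + real (card S))))
      * init_prob_aux n (insert y S) w"
    using step_prob_eq[OF Sy, of y] y fin by simp
  also have "(\<Sum>x\<in>{..<n} - insert y S. step_prob n S x * init_prob_aux n (insert x S) (y # w))
      = step_prob n S y * opening_mass n (insert y S) w"
    unfolding opening_mass_def sum_distrib_left
  proof (intro sum.cong refl)
    fix x assume "x \<in> {..<n} - insert y S"
    moreover have "insert y (insert x S) = insert x (insert y S)" by auto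
    ultimately show "step_prob n S x * init_prob_aux n (insert x S) (y # w) =
        step_prob n S y * (step_prob n (insert y S) x * init_prob_aux n (insert x (insert y S)) w)"
      using exchange by (simp add: mult.assoc[symmetric])
  qed
  finally show ?thesis by (simp add: distrib_left)
qed

lemma preimage_defect_Nil:
  assumes S: "S \<subseteq> {..<n}" and n: "n > 0"
  shows "preimage_defect n S [] = 0"
proof -
  have fin: "finite S" using S finite_subset by blast
  have j: "real (card S) \<le> real n" using card_le_of_subset_lessThan[OF S] by simp
  have "preimage_mass n S [] = (real n - real (card S))^2"
    using card_lessThan_diff[OF S]
    by (simp add: preimage_mass_def preimage_prob_def sum_lists_len_Suc sum_step_prob[OF S n]
      power2_eq_square)
  moreover have "real (card S) * (2 * real n - real (card S)) * opening_mass n S []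
      = real (card S) * (real n - real (card S))" if "S \<noteq> {}"
  proof -
    have "opening_mass n S [] = (\<Sum>x\<in>{..<n} - S. 1 / (2 * real n - real (card S)))"
      unfolding opening_mass_def using step_prob_eq[OF S] that by (intro sum.cong) auto
    also have "\<dots> = (real n - real (card S)) / (2 * real n - real (card S))"
      using card_lessThan_diff[OF S] by simp
    finally show ?thesis using j n by simp
  qed
  ultimately show ?thesis
    unfolding preimage_defect_def by (cases "S = {}") (auto simp: power2_eq_square algebra_simps)
qed

lemma preimage_defect_Cons_opened:
  assumes S: "S \<subseteq> {..<n}" and y: "y \<in> S" and w: "set w \<subseteq> {..<n}"
  shows "preimage_defect n S (y # w) = step_prob n S y * preimage_defect n S w"
proof -
  have y_lt: "y < n" and S_y: "insert y S = S" using S y by auto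
  define N where "N = real n"
  define J where "J = real (card S)"
  define sy where "sy = step_prob n S y"
  define c where "c = N / ((1 + J) * (2 * N - (1 + J)))"
  have J0: "J \<ge> 1" using y S finite_subset card_gt_0_iff[of S] unfolding J_def by fastforce
  have sy: "sy * (J * (2 * N - J)) = N"
    using step_prob_eq[OF S y_lt] y J0 card_le_of_subset_lessThan[OF S]
    unfolding sy_def J_def N_def by (simp add: field_simps)
  have G: "preimage_mass n S (y # w)
      = (2 * (N - J) - 1) * (c * opening_mass n S w) + sy * preimage_mass n S w"
    using preimage_mass_Cons[OF S y_lt w] opening_mass_Cons_opened[OF S y]
    unfolding N_def J_def sy_def c_def S_y by simp
  have "opening_mass n S w * (c * ((1 + J) * (2 * N - (1 + J))) - sy * (J * (2 * N - J))) = 0"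
  proof (cases "card S = n")
    case True
    then have "S = {..<n}" using card_seteq[OF finite_lessThan S] by simp
    then show ?thesis unfolding opening_mass_def by simp
  next
    case False
    then have "(1 + J) * (2 * N - (1 + J)) > 0"
      using card_le_of_subset_lessThan[OF S] J0 unfolding J_def N_def by (intro mult_pos_pos) auto
    then have "c * ((1 + J) * (2 * N - (1 + J))) = N" unfolding c_def
      by (metis less_irrefl eq_divide_eq)
    then show ?thesis using sy by simp
  qed
  moreover have "preimage_defect n S (y # w) - sy * preimage_defect n S w
      = opening_mass n S w * (c * ((1 + J) * (2 * N - (1 + J))) - sy * (J * (2 * N - J)))"
    using opening_mass_Cons_opened[OF S y]
    unfolding preimage_defect_def G N_def[symmetric] J_def[symmetric] c_def[symmetric]
    by (simp add: sy_def S_y algebra_simps)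
  ultimately show ?thesis unfolding sy_def by linarith
qed

lemma preimage_defect_Cons_new:
  assumes S: "S \<subseteq> {..<n}" and y: "y < n" "y \<notin> S" and w: "set w \<subseteq> {..<n}"
  shows "preimage_defect n S (y # w) = step_prob n S y * preimage_defect n (insert y S) w"
proof -
  define N where "N = real n"
  define J where "J = real (card S)"
  define sy where "sy = step_prob n S y"
  define c where "c = N / ((1 + J) * (2 * N - (1 + J)))"
  have "card S < n" using psubset_card_mono[of "{..<n}" S] S y by auto
  then have "(1 + J) * (2 * N - (1 + J)) > 0" unfolding J_def N_def by (intro mult_pos_pos) auto
  then have c: "c * ((1 + J) * (2 * N - (1 + J))) = N" unfolding c_def
    by (metis less_irrefl eq_divide_eq)
  have card_Sy: "real (card (insert y S)) = 1 + J"
    using S y finite_subset unfolding J_def by fastforce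
  have Q: "opening_mass n S (y # w)
      = sy * (c * init_prob_aux n (insert y S) w + opening_mass n (insert y S) w)"
    using opening_mass_Cons_new[OF S y] unfolding sy_def c_def N_def J_def .
  have "preimage_defect n S (y # w) - sy * preimage_defect n (insert y S) w
      = sy * init_prob_aux n (insert y S) w * (c * ((1 + J) * (2 * N - (1 + J))) - N)"
    using preimage_mass_Cons[OF S y(1) w]
    unfolding preimage_defect_def Q card_Sy N_def[symmetric] J_def[symmetric] sy_def[symmetric]
    by (simp add: sy_def algebra_simps)
  then show ?thesis using c unfolding sy_def by simp
qed

lemma preimage_defect_Cons:
  assumes "S \<subseteq> {..<n}" "y < n" "set w \<subseteq> {..<n}"
  shows "preimage_defect n S (y # w) = step_prob n S y * preimage_defect n (insert y S) w"
  using assms preimage_defect_Cons_opened[of S n y w] preimage_defect_Cons_new[of S n y w]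
  by (cases "y \<in> S") (simp_all add: insert_absorb)

lemma preimage_defect_eq_0:
  "S \<subseteq> {..<n} \<Longrightarrow> set ls \<subseteq> {..<n} \<Longrightarrow> n > 0 \<Longrightarrow> preimage_defect n S ls = 0"
  by (induction ls arbitrary: S) (simp_all add: preimage_defect_Nil preimage_defect_Cons)

definition prefix_preimages :: "nat \<Rightarrow> nat list \<Rightarrow> (nat list \<times> (nat \<times> nat)) set" where
  "prefix_preimages n ls =
     {(ls', p) \<in> lists_len {..<n} (Suc (length ls)) \<times> ({..<n} \<times> {..<n}). prefix_step p ls' = ls}"

lemma finite_prefix_preimages [simp]: "finite (prefix_preimages n ls)"
  unfolding prefix_preimages_def
  by (rule finite_subset[of _ "lists_len {..<n} (Suc (length ls)) \<times> ({..<n} \<times> {..<n})"]) auto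

theorem sum_init_prob_prefix_preimages:
  assumes n: "n > 0"
  shows "(\<Sum>(ls', p)\<in>prefix_preimages n ls. init_prob n ls') = real n ^ 2 * init_prob n ls"
proof -
  let ?L = "lists_len {..<n} (Suc (length ls))"
  have "(\<Sum>(ls', p)\<in>prefix_preimages n ls. init_prob n ls')
      = (\<Sum>(ls', p)\<in>?L \<times> ({..<n} \<times> {..<n}). if prefix_step p ls' = ls then init_prob n ls' else 0)"
    unfolding prefix_preimages_def by (rule sum.mono_neutral_cong_left) (auto split: if_splits)
  also have "\<dots> = (\<Sum>p\<in>{..<n} \<times> {..<n}. \<Sum>ls'\<in>?L. if prefix_step p ls' = ls then init_prob n ls' else 0)"
    by (simp add: sum.cartesian_product[symmetric] sum.swap[of _ ?L])
  also have "\<dots> = real n ^ 2 * init_prob n ls"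
  proof (cases "set ls \<subseteq> {..<n}")
    case True
    then show ?thesis
      using preimage_defect_eq_0[of "{}" n ls] n
      unfolding preimage_defect_def preimage_mass_def preimage_prob_def init_prob_def
      by (simp add: power2_eq_square)
  next
    case False
    then have "prefix_step p ls' \<noteq> ls" if "ls' \<in> ?L" for p ls'
      using set_prefix_step[of p ls'] that unfolding lists_len_def by auto
    then show ?thesis using False init_prob_aux_eq_0 unfolding init_prob_def by simp
  qed
  finally show ?thesis .
qed

lemma top_pos_eq_enumerate:
  assumes P: "infinite P" and ex: "\<exists>k\<in>P. Lw k = q"
  shows "top_pos Lw P q = enumerate P (LEAST i. Lw (enumerate P i) = q)"
  unfolding top_pos_def
proof (rule Least_equality)
  have ex_i: "\<exists>i. Lw (enumerate P i) = q" using ex enumerate_Ex[OF P] by metis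
  then show "enumerate P (LEAST i. Lw (enumerate P i) = q) \<in> P
      \<and> Lw (enumerate P (LEAST i. Lw (enumerate P i) = q)) = q"
    using enumerate_in_set[OF P] LeastI_ex[OF ex_i] by auto
  fix y assume y: "y \<in> P \<and> Lw y = q"
  then obtain j where "enumerate P j = y" using enumerate_Ex[OF P] by blast
  moreover have "(LEAST i. Lw (enumerate P i) = q) \<le> j" using y calculation by (auto intro: Least_le)
  ultimately show "enumerate P (LEAST i. Lw (enumerate P i) = q) \<le> y" using P by auto
qed

definition config :: "(nat \<Rightarrow> nat) \<Rightarrow> (nat \<Rightarrow> nat \<times> nat) \<Rightarrow> nat \<Rightarrow> nat \<Rightarrow> nat" where
  "config Lw cw t i = Lw (enumerate (present Lw cw t) i)"

lemma config_0: "config Lw cw 0 i = Lw i"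
  unfolding config_def by (simp add: enumerate_UNIV_nat)

(* These properties hold almost surely (AE_good); they guarantee that every queue has a top-element
   at every time. *)
locale mq_run =
  fixes n :: nat and Lw :: "nat \<Rightarrow> nat" and cw :: "nat \<Rightarrow> nat \<times> nat"
  assumes labels_lt: "\<forall>k. Lw k < n"
    and choices_lt: "\<forall>t. cw t \<in> {..<n} \<times> {..<n}"
    and labels_recur: "\<forall>q<n. \<forall>k. \<exists>k'\<ge>k. Lw k' = q"
begin

abbreviation hit :: "nat \<Rightarrow> nat \<Rightarrow> bool" where
  "hit t j \<equiv> config Lw cw t j = fst (cw t) \<or> config Lw cw t j = snd (cw t)"

lemma finite_not_present: "finite (- present Lw cw t)"
proof (induction t)
  case (Suc t)
  have "- present Lw cw (Suc t) \<subseteq> - present Lw cw t \<union> {del_pos Lw (present Lw cw t) (cw t)}"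
    by auto
  then show ?case using Suc finite_subset by blast
qed simp

lemma infinite_present: "infinite (present Lw cw t)"
  using finite_not_present[of t] finite_compl by blast

lemma ex_present_label: "q < n \<Longrightarrow> \<exists>k\<in>present Lw cw t. Lw k = q"
proof -
  assume q: "q < n"
  obtain K where K: "\<forall>x\<in>- present Lw cw t. x < K"
    using finite_not_present[of t] finite_nat_bounded by blast
  obtain k where k: "k \<ge> K" "Lw k = q" using labels_recur q by blast
  then have "k \<in> present Lw cw t" using K by (meson ComplI not_less)
  then show ?thesis using k by blast
qed

lemma ex_config_eq: "q < n \<Longrightarrow> \<exists>i. config Lw cw t i = q"
  using ex_present_label enumerate_Ex[OF infinite_present] unfolding config_def by metis

lemma deleted_eq_enumerate: "deleted Lw cw t = enumerate (present Lw cw t) (LEAST j. hit t j)"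
proof -
  let ?P = "present Lw cw t"
  have a: "fst (cw t) < n" and b: "snd (cw t) < n" using choices_lt by (auto simp: mem_Times_iff)
  have "deleted Lw cw t = min (top_pos Lw ?P (fst (cw t))) (top_pos Lw ?P (snd (cw t)))"
    unfolding deleted_def del_pos_def ..
  also have "\<dots> = min (enumerate ?P (LEAST i. config Lw cw t i = fst (cw t)))
                       (enumerate ?P (LEAST i. config Lw cw t i = snd (cw t)))"
    using top_pos_eq_enumerate[OF infinite_present ex_present_label[OF a]]
      top_pos_eq_enumerate[OF infinite_present ex_present_label[OF b]]
    unfolding config_def by simp
  also have "\<dots> = enumerate ?P (LEAST j. hit t j)"
    using Least_disj_eq_min[OF ex_config_eq[OF a] ex_config_eq[OF b]] infinite_present[of t]
    by (simp add: min_def)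
  finally show ?thesis .
qed

lemma rank_error_eq_Least: "rank_error Lw cw t = (LEAST j. hit t j)"
proof -
  let ?P = "present Lw cw t" and ?r = "LEAST j. hit t j"
  have "{k \<in> ?P. k < deleted Lw cw t} = enumerate ?P ` {..<?r}"
  proof (intro equalityI subsetI)
    fix k assume k: "k \<in> {k \<in> ?P. k < deleted Lw cw t}"
    then obtain j where "enumerate ?P j = k" using enumerate_Ex[OF infinite_present] by blast
    then show "k \<in> enumerate ?P ` {..<?r}"
      using k deleted_eq_enumerate[of t] infinite_present[of t] by auto
  qed (use deleted_eq_enumerate[of t] infinite_present[of t] enumerate_in_set in auto)
  moreover have "inj (enumerate ?P)" using inj_enumerate[OF infinite_present] .
  ultimately show ?thesis unfolding rank_error_def by (simp add: card_image inj_on_subset)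
qed

lemma rank_error_le: "hit t j \<Longrightarrow> rank_error Lw cw t \<le> j"
  unfolding rank_error_eq_Least by (rule Least_le)

lemma rank_error_le_iff: "rank_error Lw cw t \<le> i \<longleftrightarrow> (\<exists>j\<le>i. hit t j)"
proof
  have "\<exists>j. hit t j" using ex_config_eq[of "fst (cw t)" t] choices_lt by (auto simp: mem_Times_iff)
  then have "hit t (rank_error Lw cw t)" unfolding rank_error_eq_Least by (rule LeastI_ex)
  then show "rank_error Lw cw t \<le> i \<Longrightarrow> \<exists>j\<le>i. hit t j" by blast
qed (use rank_error_le le_trans in blast)

lemma rank_error_le_if_covering:
  assumes "{..<n} \<subseteq> set (map (config Lw cw t) [0..<Suc K])"
  shows "rank_error Lw cw t \<le> K"
proof -
  have "fst (cw t) < n" using choices_lt by (auto simp: mem_Times_iff)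
  then obtain j where "j \<le> K" "config Lw cw t j = fst (cw t)"
    using assms by (auto simp del: upt_Suc simp: less_Suc_eq_le)
  then show ?thesis using rank_error_le by fastforce
qed

lemma config_Suc:
  "config Lw cw (Suc t) i =
     (if rank_error Lw cw t \<le> i then config Lw cw t (Suc i) else config Lw cw t i)"
proof -
  have "present Lw cw (Suc t) = present Lw cw t - {enumerate (present Lw cw t) (rank_error Lw cw t)}"
    using deleted_eq_enumerate[of t] unfolding deleted_def rank_error_eq_Least by simp
  then show ?thesis
    unfolding config_def using enumerate_Diff_enumerate[OF infinite_present] by simp
qed

lemma config_Suc_prefix:
  "map (config Lw cw (Suc t)) [0..<m] = prefix_step (cw t) (map (config Lw cw t) [0..<Suc m])"
  by (rule nth_equalityI) (auto simp: nth_prefix_step config_Suc rank_error_le_iff simp del: upt_Suc)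

lemma config_lt: "config Lw cw t i < n"
  unfolding config_def using labels_lt by simp

end

lemma measurable_countable_compose2:
  fixes f :: "'a \<Rightarrow> 'b::countable"
  assumes f: "f \<in> measurable M (count_space UNIV)" and g: "g \<in> measurable M (count_space UNIV)"
  shows "(\<lambda>x. h (f x) (g x)) \<in> measurable M (count_space UNIV)"
proof (rule measurable_compose_countable[where f = "\<lambda>i x. h i (g x)", OF _ f])
  show "(\<lambda>x. h i (g x)) \<in> measurable M (count_space UNIV)" for i
    using measurable_compose[OF g, of "\<lambda>y. h i y" "count_space UNIV"] by simp
qed

context
  fixes M :: "'a measure" and L :: "'a \<Rightarrow> nat \<Rightarrow> nat" and c :: "'a \<Rightarrow> nat \<Rightarrow> nat \<times> nat"
  assumes L_measurable: "\<And>k. (\<lambda>\<omega>. L \<omega> k) \<in> measurable M (count_space UNIV)"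
    and c_measurable: "\<And>t. (\<lambda>\<omega>. c \<omega> t) \<in> measurable M (count_space UNIV)"
begin

lemma measurable_present_deleted:
  shows measurable_present: "(\<lambda>\<omega>. k \<in> present (L \<omega>) (c \<omega>) t) \<in> measurable M (count_space UNIV)"
    and measurable_deleted: "(\<lambda>\<omega>. deleted (L \<omega>) (c \<omega>) t) \<in> measurable M (count_space UNIV)"
proof -
  have deleted: "(\<lambda>\<omega>. deleted (L \<omega>) (c \<omega>) t) \<in> measurable M (count_space UNIV)"
    if present: "\<And>k. (\<lambda>\<omega>. k \<in> present (L \<omega>) (c \<omega>) t) \<in> measurable M (count_space UNIV)" for t
  proof -
    have top: "(\<lambda>\<omega>. top_pos (L \<omega>) (present (L \<omega>) (c \<omega>) t) q) \<in> measurable M (count_space UNIV)" for q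
      unfolding top_pos_def
      by (rule measurable_Least, rule measurable_countable_compose2[OF present L_measurable])
    show ?thesis
      unfolding deleted_def del_pos_def
      by (rule measurable_compose_countable[where f = "\<lambda>p \<omega>.
          min (top_pos (L \<omega>) (present (L \<omega>) (c \<omega>) t) (fst p))
          (top_pos (L \<omega>) (present (L \<omega>) (c \<omega>) t) (snd p))", OF _ c_measurable])
        (rule measurable_countable_compose2[OF top top])
  qed
  have present: "(\<lambda>\<omega>. k \<in> present (L \<omega>) (c \<omega>) t) \<in> measurable M (count_space UNIV)" for k
  proof (induction t arbitrary: k)
    case (Suc t)
    have "(\<lambda>\<omega>. k \<in> present (L \<omega>) (c \<omega>) (Suc t))
        = (\<lambda>\<omega>. k \<in> present (L \<omega>) (c \<omega>) t \<and> k \<noteq> deleted (L \<omega>) (c \<omega>) t)"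
      by (auto simp: deleted_def)
    then show ?case
      using measurable_countable_compose2[OF Suc deleted[OF Suc], of "\<lambda>a b. a \<and> k \<noteq> b"] by simp
  qed simp
  show "(\<lambda>\<omega>. k \<in> present (L \<omega>) (c \<omega>) t) \<in> measurable M (count_space UNIV)" by (rule present)
  show "(\<lambda>\<omega>. deleted (L \<omega>) (c \<omega>) t) \<in> measurable M (count_space UNIV)" by (rule deleted[OF present])
qed

lemma measurable_rank_error: "(\<lambda>\<omega>. rank_error (L \<omega>) (c \<omega>) t) \<in> measurable M (count_space UNIV)"
proof -
  have below: "(\<lambda>\<omega>. card {k \<in> present (L \<omega>) (c \<omega>) t. k < d}) \<in> measurable M (count_space UNIV)" for d
  proof (induction d)
    case (Suc d)
    have "card {k \<in> P. k < Suc d} = card {k \<in> P. k < d} + (if d \<in> P then 1 else 0)" for P :: "nat set"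
    proof -
      have "{k \<in> P. k < Suc d} = (if d \<in> P then insert d {k \<in> P. k < d} else {k \<in> P. k < d})"
        by (auto simp: less_Suc_eq)
      then show ?thesis by simp
    qed
    then show ?case
      by (simp only:) (rule measurable_countable_compose2[OF Suc measurable_present])
  qed simp
  show ?thesis
    unfolding rank_error_def
    by (rule measurable_compose_countable[where f = "\<lambda>d \<omega>. card {k \<in> present (L \<omega>) (c \<omega>) t. k < d}",
          OF below measurable_deleted])
qed

end

locale mq_long_run_space =
  fixes M :: "'a measure" and n :: nat and L :: "'a \<Rightarrow> nat \<Rightarrow> nat" and c :: "'a \<Rightarrow> nat \<Rightarrow> nat \<times> nat"
  assumes long_run: "mq_long_run M n L c" and n_pos: "n > 0"

sublocale mq_long_run_space \<subseteq> prob_space M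
  using long_run unfolding mq_long_run_def by auto

context mq_long_run_space
begin

lemma L_measurable [measurable]: "(\<lambda>\<omega>. L \<omega> k) \<in> measurable M (count_space UNIV)"
  using long_run unfolding mq_long_run_def by auto

lemma c_measurable [measurable]: "(\<lambda>\<omega>. c \<omega> t) \<in> measurable M (count_space UNIV)"
  using long_run unfolding mq_long_run_def by auto

lemma pred_L [measurable]: "Measurable.pred M (\<lambda>\<omega>. L \<omega> k = x)" "Measurable.pred M (\<lambda>\<omega>. L \<omega> k < x)"
  by (rule measurable_compose[OF L_measurable], simp)+

lemma pred_c [measurable]: "Measurable.pred M (\<lambda>\<omega>. c \<omega> t = p)" "Measurable.pred M (\<lambda>\<omega>. c \<omega> t \<in> X)"
  by (rule measurable_compose[OF c_measurable], simp)+

definition initial_cylinder :: "nat list \<Rightarrow> (nat \<times> nat) list \<Rightarrow> 'a set" where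
  "initial_cylinder ls ps =
     {\<omega> \<in> space M. (\<forall>i<length ls. L \<omega> i = ls ! i) \<and> (\<forall>s<length ps. c \<omega> s = ps ! s)}"

lemma initial_cylinder_sets [measurable]: "initial_cylinder ls ps \<in> sets M"
  unfolding initial_cylinder_def by measurable

lemma measure_initial_cylinder:
  assumes "set ps \<subseteq> {..<n} \<times> {..<n}"
  shows "measure M (initial_cylinder ls ps) = init_prob n ls * (1 / real n ^ 2) ^ length ps"
proof -
  have "\<forall>t<length ps. (!) ps t \<in> {0..<n} \<times> {0..<n}" using assms nth_mem by fastforce
  then show ?thesis using long_run unfolding mq_long_run_def initial_cylinder_def by auto
qed

lemma initial_cylinder_eq:
  assumes "\<omega> \<in> initial_cylinder ls ps" "\<omega> \<in> initial_cylinder ls' ps'"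
    and "length ls = length ls'" "length ps = length ps'"
  shows "ls = ls' \<and> ps = ps'"
  using assms unfolding initial_cylinder_def by (auto simp: list_eq_iff_nth_eq)

lemma measure_UN_initial_cylinder:
  assumes I: "finite I" "I \<subseteq> lists_len UNIV m \<times> lists_len ({..<n} \<times> {..<n}) T"
  shows "measure M (\<Union>(ls, ps)\<in>I. initial_cylinder ls ps)
    = (\<Sum>(ls, ps)\<in>I. init_prob n ls * (1 / real n ^ 2) ^ T)"
proof -
  have "disjoint_family_on (\<lambda>(ls, ps). initial_cylinder ls ps) I"
    unfolding disjoint_family_on_def
  proof (intro ballI impI)
    fix x y assume x: "x \<in> I" and y: "y \<in> I" and "x \<noteq> y"
    obtain ls ps ls' ps' where xy: "x = (ls, ps)" "y = (ls', ps')" by fastforce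
    moreover have "length ls = length ls'" "length ps = length ps'"
      using subsetD[OF I(2) x] subsetD[OF I(2) y] xy by (auto simp: lists_len_def)
    ultimately show
      "(\<lambda>(ls, ps). initial_cylinder ls ps) x \<inter> (\<lambda>(ls, ps). initial_cylinder ls ps) y = {}"
      using \<open>x \<noteq> y\<close> initial_cylinder_eq[of _ ls ps ls' ps'] by auto
  qed
  then have "measure M (\<Union>(ls, ps)\<in>I. initial_cylinder ls ps)
      = (\<Sum>x\<in>I. measure M ((\<lambda>(ls, ps). initial_cylinder ls ps) x))"
    using I(1) by (intro measure_finite_Union) auto
  also have "\<dots> = (\<Sum>(ls, ps)\<in>I. init_prob n ls * (1 / real n ^ 2) ^ T)"
    using I(2) by (intro sum.cong) (auto simp: measure_initial_cylinder lists_len_def)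
  finally show ?thesis .
qed

lemma prob_labels_choices_lt:
  "prob {\<omega>\<in>space M. (\<forall>i<m. L \<omega> i < n) \<and> (\<forall>s<T. c \<omega> s \<in> {..<n} \<times> {..<n})} = 1"
proof -
  let ?I = "lists_len {..<n} m \<times> lists_len ({..<n} \<times> {..<n}) T"
  have "{\<omega>\<in>space M. (\<forall>i<m. L \<omega> i < n) \<and> (\<forall>s<T. c \<omega> s \<in> {..<n} \<times> {..<n})}
      = (\<Union>(ls, ps)\<in>?I. initial_cylinder ls ps)"
  proof (intro equalityI subsetI)
    fix \<omega> assume \<omega>: "\<omega> \<in> {\<omega>\<in>space M. (\<forall>i<m. L \<omega> i < n) \<and> (\<forall>s<T. c \<omega> s \<in> {..<n} \<times> {..<n})}"
    then have "(map (L \<omega>) [0..<m], map (c \<omega>) [0..<T]) \<in> ?I"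
      by (auto simp: lists_len_def)
    moreover have "\<omega> \<in> initial_cylinder (map (L \<omega>) [0..<m]) (map (c \<omega>) [0..<T])"
      using \<omega> unfolding initial_cylinder_def by auto
    ultimately show "\<omega> \<in> (\<Union>(ls, ps)\<in>?I. initial_cylinder ls ps)" by blast
  qed (auto simp: initial_cylinder_def lists_len_def, (metis lessThan_iff nth_mem subsetD)+)
  moreover have "measure M (\<Union>(ls, ps)\<in>?I. initial_cylinder ls ps)
      = (\<Sum>(ls, ps)\<in>?I. init_prob n ls * (1 / real n ^ 2) ^ T)"
    by (rule measure_UN_initial_cylinder[of _ m T]) (simp, auto simp: lists_len_def)
  moreover have "\<dots> = (\<Sum>ls\<in>lists_len {..<n} m. init_prob n ls)
      * (real (card (lists_len ({..<n} \<times> {..<n}) T)) * (1 / real n ^ 2) ^ T)"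
    by (simp add: sum.cartesian_product[symmetric] sum_distrib_right mult_ac)
  moreover have "real (card (lists_len ({..<n} \<times> {..<n}) T)) = (real n ^ 2) ^ T"
    by (simp add: card_lists_len power2_eq_square)
  moreover have "(\<Sum>ls\<in>lists_len {..<n} m. init_prob n ls) = 1"
    unfolding init_prob_def using sum_init_prob_aux[of "{}" n m] n_pos by simp
  ultimately show ?thesis using n_pos by (simp add: power_mult_distrib[symmetric])
qed

lemma AE_labels_choices_lt: "AE \<omega> in M. (\<forall>k. L \<omega> k < n) \<and> (\<forall>t. c \<omega> t \<in> {..<n} \<times> {..<n})"
proof -
  have "AE \<omega> in M. L \<omega> k < n \<and> c \<omega> t \<in> {..<n} \<times> {..<n}" for k t
  proof -
    have "AE \<omega> in M. \<omega> \<in> {\<omega>\<in>space M. (\<forall>i<Suc k. L \<omega> i < n) \<and> (\<forall>s<Suc t. c \<omega> s \<in> {..<n} \<times> {..<n})}"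
      by (rule AE_prob_1) (rule prob_labels_choices_lt)
    then show ?thesis by eventually_elim auto
  qed
  then show ?thesis by (auto simp: AE_all_countable)
qed

lemma AE_label_recurs:
  assumes q: "q < n"
  shows "AE \<omega> in M. \<exists>k'\<ge>k. L \<omega> k' = q"
proof -
  define N where "N = {\<omega>\<in>space M. (\<forall>i. L \<omega> i < n) \<and> (\<forall>k'\<ge>k. L \<omega> k' \<noteq> q)}"
  have N_sets: "N \<in> sets M" unfolding N_def by measurable
  define x where "x = 1 - 1 / (2 * real n)"
  have "prob N \<le> x ^ m" for m
  proof -
    let ?LS = "{ls\<in>lists_len {..<n} (k + m). \<forall>i<k + m. k \<le> i \<longrightarrow> ls ! i \<noteq> q}"
    have "N \<subseteq> (\<Union>(ls, ps)\<in>?LS \<times> {[]}. initial_cylinder ls ps)"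
    proof
      fix \<omega> assume \<omega>: "\<omega> \<in> N"
      then have "(map (L \<omega>) [0..<k + m], []) \<in> ?LS \<times> {[]}"
        unfolding N_def by (auto simp: lists_len_def)
      moreover have "\<omega> \<in> initial_cylinder (map (L \<omega>) [0..<k + m]) []"
        using \<omega> unfolding N_def initial_cylinder_def by auto
      ultimately show "\<omega> \<in> (\<Union>(ls, ps)\<in>?LS \<times> {[]}. initial_cylinder ls ps)" by blast
    qed
    then have "prob N \<le> prob (\<Union>(ls, ps)\<in>?LS \<times> {[]}. initial_cylinder ls ps)"
      by (intro finite_measure_mono) auto
    also have "\<dots> = (\<Sum>ls\<in>?LS. init_prob n ls)"
      by (subst measure_UN_initial_cylinder[of _ "k + m" 0])
        (simp, auto simp: lists_len_def sum.cartesian_product[symmetric])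
    also have "\<dots> = (\<Sum>ls\<in>lists_len {..<n} (k + m).
        if \<forall>i<k + m. k \<le> i \<longrightarrow> ls ! i \<noteq> q then init_prob_aux n {} ls else 0)"
      unfolding init_prob_def by (simp add: sum.inter_filter)
    also have "\<dots> \<le> x ^ card {i. i < k + m \<and> k \<le> i}"
      unfolding x_def using init_prob_aux_avoid_le[of "{}" n q] q by simp
    also have "{i. i < k + m \<and> k \<le> i} = {k..<k + m}" by auto
    finally show ?thesis by simp
  qed
  moreover have "0 \<le> x" "x < 1" unfolding x_def using n_pos by (simp_all add: field_simps)
  ultimately have "prob N \<le> 0"
    using LIMSEQ_le_const[OF LIMSEQ_realpow_zero] by blast
  then have "AE \<omega> in M. \<omega> \<notin> N" using prob_eq_0[OF N_sets] measure_nonneg[of M N] by simp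
  then show ?thesis using AE_labels_choices_lt AE_space by eventually_elim (auto simp: N_def)
qed

definition good :: "'a set" where
  "good = {\<omega> \<in> space M. mq_run n (L \<omega>) (c \<omega>)}"

lemma good_sets [measurable]: "good \<in> sets M"
  unfolding good_def mq_run_def by measurable

lemma AE_good: "AE \<omega> in M. \<omega> \<in> good"
proof -
  have "AE \<omega> in M. \<forall>q<n. \<forall>k. \<exists>k'\<ge>k. L \<omega> k' = q"
    using AE_label_recurs by (auto simp: AE_all_countable)
  then show ?thesis
    using AE_labels_choices_lt AE_space by eventually_elim (auto simp: good_def mq_run_def)
qed

definition cylinder :: "nat \<Rightarrow> nat list \<Rightarrow> (nat \<times> nat) list \<Rightarrow> 'a set" where
  "cylinder t ls ps = {\<omega> \<in> good. (\<forall>i<length ls. config (L \<omega>) (c \<omega>) t i = ls ! i)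
                                  \<and> (\<forall>s<length ps. c \<omega> (t + s) = ps ! s)}"

lemma cylinder_0: "cylinder 0 ls ps = good \<inter> initial_cylinder ls ps"
  unfolding cylinder_def initial_cylinder_def good_def by (auto simp: config_0)

lemma cylinder_Suc_subset:
  "cylinder (Suc t) ls ps \<subseteq> (\<Union>(ls', p)\<in>prefix_preimages n ls. cylinder t ls' (p # ps))"
proof
  fix \<omega> assume \<omega>: "\<omega> \<in> cylinder (Suc t) ls ps"
  then have "\<omega> \<in> good" unfolding cylinder_def by blast
  then interpret mq_run n "L \<omega>" "c \<omega>" unfolding good_def by blast
  define ls' where "ls' = map (config (L \<omega>) (c \<omega>) t) [0..<Suc (length ls)]"
  have "ls' \<in> lists_len {..<n} (Suc (length ls))"
    unfolding ls'_def lists_len_def using config_lt by auto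
  moreover have "c \<omega> t \<in> {..<n} \<times> {..<n}" using choices_lt by blast
  moreover have "prefix_step (c \<omega> t) ls' = ls"
  proof -
    have "map (config (L \<omega>) (c \<omega>) (Suc t)) [0..<length ls] = ls"
      using \<omega> unfolding cylinder_def map_upt_length_eq_iff by blast
    then show ?thesis unfolding ls'_def config_Suc_prefix .
  qed
  ultimately have preimage: "(ls', c \<omega> t) \<in> prefix_preimages n ls"
    unfolding prefix_preimages_def by simp
  have "\<forall>i<length ls'. config (L \<omega>) (c \<omega>) t i = ls' ! i"
    unfolding ls'_def by (simp del: upt_Suc)
  moreover have "\<forall>s<length (c \<omega> t # ps). c \<omega> (t + s) = (c \<omega> t # ps) ! s"
    using \<omega> unfolding cylinder_def by (auto simp: less_Suc_eq_0_disj)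
  ultimately have "\<omega> \<in> cylinder t ls' (c \<omega> t # ps)"
    using \<open>\<omega> \<in> good\<close> unfolding cylinder_def by simp
  then show "\<omega> \<in> (\<Union>(ls', p)\<in>prefix_preimages n ls. cylinder t ls' (p # ps))"
    by (intro UN_I[OF preimage]) simp
qed

lemma UN_prefix_preimages_subset_cylinder:
  "(\<Union>(ls', p)\<in>prefix_preimages n ls. cylinder t ls' (p # ps)) \<subseteq> cylinder (Suc t) ls ps"
proof
  fix \<omega> assume "\<omega> \<in> (\<Union>(ls', p)\<in>prefix_preimages n ls. cylinder t ls' (p # ps))"
  then obtain ls' p where ls': "ls' \<in> lists_len {..<n} (Suc (length ls))" "prefix_step p ls' = ls"
    and \<omega>: "\<omega> \<in> cylinder t ls' (p # ps)" unfolding prefix_preimages_def by auto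
  then have "\<omega> \<in> good" unfolding cylinder_def by auto
  then interpret mq_run n "L \<omega>" "c \<omega>" unfolding good_def by simp
  have len: "length ls' = Suc (length ls)" using ls'(1) unfolding lists_len_def by simp
  have labels: "\<forall>i<length ls'. config (L \<omega>) (c \<omega>) t i = ls' ! i"
    and choices: "\<forall>s<length (p # ps). c \<omega> (t + s) = (p # ps) ! s"
    using \<omega> unfolding cylinder_def by blast+
  from labels have "map (config (L \<omega>) (c \<omega>) t) [0..<Suc (length ls)] = ls'"
    unfolding len[symmetric] map_upt_length_eq_iff .
  moreover have "c \<omega> t = p" using choices[rule_format, of 0] by simp
  ultimately have "map (config (L \<omega>) (c \<omega>) (Suc t)) [0..<length ls] = ls"
    using config_Suc_prefix[of t "length ls"] ls'(2) by (simp only:)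
  then have "\<forall>i<length ls. config (L \<omega>) (c \<omega>) (Suc t) i = ls ! i"
    unfolding map_upt_length_eq_iff .
  moreover have "\<forall>s<length ps. c \<omega> (Suc t + s) = ps ! s"
    using choices by auto
  ultimately show "\<omega> \<in> cylinder (Suc t) ls ps"
    using \<open>\<omega> \<in> good\<close> unfolding cylinder_def by simp
qed

lemma cylinder_Suc:
  "cylinder (Suc t) ls ps = (\<Union>(ls', p)\<in>prefix_preimages n ls. cylinder t ls' (p # ps))"
  by (rule equalityI[OF cylinder_Suc_subset UN_prefix_preimages_subset_cylinder])

lemma cylinder_eq:
  assumes "\<omega> \<in> cylinder t ls ps" "\<omega> \<in> cylinder t ls' ps'"
    and "length ls = length ls'" "length ps = length ps'"
  shows "ls = ls' \<and> ps = ps'"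
  using assms unfolding cylinder_def by (auto simp: list_eq_iff_nth_eq)

theorem cylinder_sets_measure:
  assumes "set ps \<subseteq> {..<n} \<times> {..<n}"
  shows "cylinder t ls ps \<in> sets M
    \<and> measure M (cylinder t ls ps) = init_prob n ls * (1 / real n ^ 2) ^ length ps"
  using assms
proof (induction t arbitrary: ls ps)
  case 0
  have sets: "cylinder 0 ls ps \<in> sets M" unfolding cylinder_0 by measurable
  have "measure M (cylinder 0 ls ps) = measure M (initial_cylinder ls ps)"
    by (rule finite_measure_eq_AE) (use AE_good sets in \<open>auto simp: cylinder_0\<close>)
  then show ?case using sets measure_initial_cylinder[OF "0.prems"] by simp
next
  case (Suc t)
  let ?I = "prefix_preimages n ls"
  let ?C = "\<lambda>(ls', p). cylinder t ls' (p # ps)"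
  have finite_I: "finite ?I" by simp
  have C: "?C x \<in> sets M \<and> measure M (?C x) = init_prob n (fst x) * (1 / real n ^ 2) ^ Suc (length ps)"
    if "x \<in> ?I" for x
    using Suc.IH[of "snd x # ps" "fst x"] Suc.prems that
      by (auto simp: case_prod_beta prefix_preimages_def)
  have disjoint: "disjoint_family_on ?C ?I"
    unfolding disjoint_family_on_def
  proof (intro ballI impI)
    fix x y assume x: "x \<in> ?I" and y: "y \<in> ?I" and "x \<noteq> y"
    obtain ls1 p1 ls2 p2 where xy: "x = (ls1, p1)" "y = (ls2, p2)" by (cases x, cases y) simp
    moreover have "length ls1 = length ls2" using x y xy
      by (auto simp: prefix_preimages_def lists_len_def)
    ultimately show "?C x \<inter> ?C y = {}"
      using \<open>x \<noteq> y\<close> cylinder_eq[of _ t ls1 "p1 # ps" ls2 "p2 # ps"] by auto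
  qed
  have sets: "cylinder (Suc t) ls ps \<in> sets M"
    unfolding cylinder_Suc using C finite_I by (auto intro!: sets.finite_UN)
  have "measure M (cylinder (Suc t) ls ps) = (\<Sum>x\<in>?I. measure M (?C x))"
    unfolding cylinder_Suc using C finite_I disjoint by (intro measure_finite_Union) auto
  also have "\<dots> = (\<Sum>x\<in>?I. init_prob n (fst x) * (1 / real n ^ 2) ^ Suc (length ps))"
    using C by (intro sum.cong) auto
  also have "\<dots> = (\<Sum>(ls', p)\<in>?I. init_prob n ls') * (1 / real n ^ 2) ^ Suc (length ps)"
    by (simp add: sum_distrib_right sum_divide_distrib split_def)
  also have "\<dots> = init_prob n ls * (1 / real n ^ 2) ^ length ps"
    unfolding sum_init_prob_prefix_preimages[OF n_pos] using n_pos by (simp add: field_simps)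
  finally show ?case using sets by simp
qed

lemma rank_error_gt_subset:
  "{\<omega> \<in> good. K < rank_error (L \<omega>) (c \<omega>) t}
     \<subseteq> (\<Union>ls\<in>{ls \<in> lists_len {..<n} (Suc K). \<not> {..<n} \<subseteq> set ls}. cylinder t ls [])"
proof
  fix \<omega> assume \<omega>: "\<omega> \<in> {\<omega> \<in> good. K < rank_error (L \<omega>) (c \<omega>) t}"
  then interpret mq_run n "L \<omega>" "c \<omega>" unfolding good_def by blast
  define ls where "ls = map (config (L \<omega>) (c \<omega>) t) [0..<Suc K]"
  have "ls \<in> lists_len {..<n} (Suc K)" unfolding ls_def lists_len_def using config_lt by auto
  moreover have "\<not> {..<n} \<subseteq> set ls" using rank_error_le_if_covering[of t K] \<omega> unfolding ls_def by auto
  moreover have "\<omega> \<in> cylinder t ls []" unfolding cylinder_def ls_def using \<omega> by (simp del: upt_Suc)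
  ultimately show "\<omega> \<in> (\<Union>ls\<in>{ls \<in> lists_len {..<n} (Suc K). \<not> {..<n} \<subseteq> set ls}. cylinder t ls [])"
    by blast
qed

lemma prob_rank_error_gt:
  "prob {\<omega> \<in> space M. K < rank_error (L \<omega>) (c \<omega>) t} \<le> real n * (1 - 1 / (2 * real n)) ^ Suc K"
proof -
  let ?LS = "{ls \<in> lists_len {..<n} (Suc K). \<not> {..<n} \<subseteq> set ls}"
  have finite_LS: "finite ?LS" by simp
  have cyl: "cylinder t ls [] \<in> sets M \<and> measure M (cylinder t ls []) = init_prob n ls" for ls
    using cylinder_sets_measure[where ps = "[]" and t = t and ls = ls] by simp
  have union_sets: "(\<Union>ls\<in>?LS. cylinder t ls []) \<in> sets M"
    using cyl finite_LS by (intro sets.finite_UN) auto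
  have "{\<omega> \<in> space M. K < rank_error (L \<omega>) (c \<omega>) t} \<subseteq> (space M - good) \<union> (\<Union>ls\<in>?LS. cylinder t ls [])"
    using rank_error_gt_subset[of K t] good_def by blast
  then have "prob {\<omega> \<in> space M. K < rank_error (L \<omega>) (c \<omega>) t}
      \<le> prob ((space M - good) \<union> (\<Union>ls\<in>?LS. cylinder t ls []))"
    using union_sets by (intro finite_measure_mono) auto
  also have "\<dots> \<le> prob (space M - good) + prob (\<Union>ls\<in>?LS. cylinder t ls [])"
    using union_sets by (intro measure_Un_le) auto
  also have "prob (space M - good) = 0"
    using prob_compl[OF good_sets] prob_eq_1[OF good_sets] AE_good by simp
  also have "prob (\<Union>ls\<in>?LS. cylinder t ls []) \<le> (\<Sum>ls\<in>?LS. prob (cylinder t ls []))"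
    using cyl finite_LS by (intro finite_measure_subadditive_finite) auto
  also have "\<dots> = (\<Sum>ls\<in>lists_len {..<n} (Suc K). if \<not> {..<n} \<subseteq> set ls then init_prob n ls else 0)"
    using cyl by (simp add: sum.inter_filter)
  also have "\<dots> \<le> real n * (1 - 1 / (2 * real n)) ^ Suc K"
    by (rule sum_init_prob_not_covering[OF n_pos])
  finally show ?thesis by simp
qed

lemma prob_rank_errors_le:
  "prob {\<omega> \<in> space M. \<forall>t<T. rank_error (L \<omega>) (c \<omega>) t \<le> K}
     \<ge> 1 - real T * (real n * (1 - 1 / (2 * real n)) ^ Suc K)"
proof -
  have rank_sets: "{\<omega> \<in> space M. K < rank_error (L \<omega>) (c \<omega>) t} \<in> sets M" for t
    using measurable_rank_error[OF L_measurable c_measurable, where t = t] by measurable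
  have "{\<omega> \<in> space M. \<forall>t<T. rank_error (L \<omega>) (c \<omega>) t \<le> K}
      = space M - (\<Union>t<T. {\<omega> \<in> space M. K < rank_error (L \<omega>) (c \<omega>) t})"
    by auto
  moreover have "prob (\<Union>t<T. {\<omega> \<in> space M. K < rank_error (L \<omega>) (c \<omega>) t})
      \<le> (\<Sum>t<T. prob {\<omega> \<in> space M. K < rank_error (L \<omega>) (c \<omega>) t})"
    using rank_sets by (intro finite_measure_subadditive_finite) auto
  moreover have "\<dots> \<le> real T * (real n * (1 - 1 / (2 * real n)) ^ Suc K)"
    using sum_mono[of "{..<T}" _ "\<lambda>_. real n * (1 - 1 / (2 * real n)) ^ Suc K",
        OF prob_rank_error_gt]
    by simp
  ultimately show ?thesis using rank_sets by (simp add: prob_compl)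
qed

end

lemma one_minus_inverse_pow_le_powr:
  fixes b :: real and n m :: nat
  assumes n: "n > 0" and m: "real m \<ge> 2 * b * real n * ln (real n)"
  shows "(1 - 1 / (2 * real n)) ^ m \<le> real n powr (- b)"
proof -
  define u where "u = 1 / (2 * real n)"
  have u: "0 \<le> u" "u \<le> 1" unfolding u_def using n by (simp_all add: field_simps)
  have "(1 - u) ^ m \<le> exp (- u) ^ m"
    using exp_ge_add_one_self[of "- u"] u by (intro power_mono) auto
  also have "\<dots> = exp (real m * (- u))" by (rule exp_of_nat_mult[symmetric])
  also have "\<dots> \<le> exp (- b * ln (real n))"
  proof -
    have "b * ln (real n) = 2 * b * real n * ln (real n) * u"
      unfolding u_def using n by (simp add: field_simps)
    also have "\<dots> \<le> real m * u" using m u by (intro mult_right_mono) auto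
    finally show ?thesis by simp
  qed
  also have "\<dots> = real n powr (- b)" using n by (simp add: powr_def)
  finally show ?thesis unfolding u_def .
qed

lemma geometric_tail_le:
  fixes a :: real and n m :: nat
  assumes a: "a > 0" and n: "n \<ge> 2" and m: "real m \<ge> (4 * a + 4) * real n * ln (real n)"
  shows "(real n powr a + 1) * (real n * (1 - 1 / (2 * real n)) ^ m) \<le> real n powr (- a)"
proof -
  define y where "y = real n powr a"
  have n0: "real n > 0" using n by simp
  have y1: "y \<ge> 1" unfolding y_def using n a by (simp add: ge_one_powr_ge_zero)
  have "(1 - 1 / (2 * real n)) ^ m \<le> real n powr (- (a + a + 2))"
    using m n by (intro one_minus_inverse_pow_le_powr) (auto simp: algebra_simps)
  also have "real n powr (- (a + a + 2)) = 1 / (y * y * (real n * real n))"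
    unfolding powr_minus y_def powr_add using n0
      by (simp add: powr_numeral power2_eq_square divide_inverse)
  finally have tail: "(1 - 1 / (2 * real n)) ^ m \<le> 1 / (y * y * (real n * real n))" .
  have "(y + 1) * (real n * (1 - 1 / (2 * real n)) ^ m)
      \<le> (y + 1) * (real n * (1 / (y * y * (real n * real n))))"
    using tail y1 n0 by (intro mult_left_mono) auto
  also have "\<dots> = (y + 1) / (y * real n) * (1 / y)" using y1 n0 by (simp add: field_simps)
  also have "\<dots> \<le> 1 * (1 / y)"
  proof (intro mult_right_mono)
    have "y * 2 \<le> y * real n" using n y1 by (intro mult_left_mono) auto
    then have "y + 1 \<le> y * real n" using y1 by linarith
    then show "(y + 1) / (y * real n) \<le> 1" using y1 n0 by (simp add: field_simps)
  qed (use y1 in auto)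
  also have "\<dots> = real n powr (- a)" unfolding y_def by (simp add: powr_minus divide_inverse)
  finally show ?thesis unfolding y_def .
qed

lemma (in mq_long_run_space) rank_errors_le_n_ln_n:
  assumes a: "a > 0" and n: "n \<ge> 2"
  shows "prob {\<omega> \<in> space M. \<forall>t. real t < real n powr a \<longrightarrow>
             real (rank_error (L \<omega>) (c \<omega>) t) \<le> (4 * a + 4) * real n * ln (real n)}
           \<ge> 1 - real n powr (- a)"
proof -
  define B where "B = (4 * a + 4) * real n * ln (real n)"
  define T where "T = nat \<lceil>real n powr a\<rceil>"
  define K where "K = nat \<lfloor>B\<rfloor>"
  have B: "B \<ge> 0" unfolding B_def using a n by simp
  have "real t < real n powr a \<longleftrightarrow> t < T" for t
    unfolding T_def by (simp add: zless_nat_eq_int_zless less_ceiling_iff)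
  moreover have "real r \<le> B \<longleftrightarrow> r \<le> K" for r
    unfolding K_def using B by (simp add: le_nat_iff le_floor_iff)
  ultimately have event_eq:
    "{\<omega> \<in> space M. \<forall>t. real t < real n powr a \<longrightarrow> real (rank_error (L \<omega>) (c \<omega>) t) \<le> B}
      = {\<omega> \<in> space M. \<forall>t<T. rank_error (L \<omega>) (c \<omega>) t \<le> K}" by simp
  have tail: "real T * (real n * (1 - 1 / (2 * real n)) ^ Suc K) \<le> real n powr (- a)"
  proof -
    have "real T \<le> real n powr a + 1" using powr_ge_zero[of "real n" a] unfolding T_def by linarith
    moreover have "real n * (1 - 1 / (2 * real n)) ^ Suc K \<ge> 0" using n by simp
    moreover have "real (Suc K) \<ge> B" unfolding K_def using B by linarith
    ultimately show ?thesis
      using geometric_tail_le[OF a n, of "Suc K"] unfolding B_def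
      by (meson mult_right_mono order_trans)
  qed
  show ?thesis
    unfolding B_def[symmetric] event_eq using prob_rank_errors_le[of T K] tail by linarith
qed

theorem theorem9:
  "\<forall>a::real. a > 0 \<longrightarrow>
     (\<exists>C::real. C > 0 \<and> (\<exists>N::nat. \<forall>n\<ge>N.
        \<forall>(M::'a measure) L c. mq_long_run M n L c \<longrightarrow>
          measure M {\<omega> \<in> space M. \<forall>t::nat. real t < real n powr a \<longrightarrow>
              real (rank_error (L \<omega>) (c \<omega>) t) \<le> C * real n * ln (real n)}
            \<ge> 1 - real n powr (- a)))"
  apply (intro allI impI)
  subgoal for a
    by (intro exI[of _ "4 * a + 4"] conjI exI[of _ "2::nat"] allI impI
        mq_long_run_space.rank_errors_le_n_ln_n) (auto simp: mq_long_run_space_def)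
  done

end
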